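(* Let $G$ be a second countable locally compact Hausdorff groupoid with a fixed left Haar system $\lambda=\{\lambda^u\}_{u\in G^0}$, and let $(\Phi,\Psi)$ be a complementary pair of $N$-functions with $\Phi\in\Delta_2$. For $f\in C_c(G)$, the function $g:G^0\to\mathbb R$, $g(u)=\|f^u\|^0_\Phi$, where $f^u=f|_{G^u}$, is continuous on $G^0$ with compact support.
   Context: $G^0$ is the unit space, $r(x)=xx^{-1}$, $G^u=r^{-1}(u)$. The left Haar system consists of positive Radon measures $\lambda^u$ with support $G^u$ such that $u\mapsto\int f\,d\lambda^u$ is continuous for every $f\in C_c(G)$ and $\int f(xy)d\lambda^{d(x)}(y)=\int f(y)d\lambda^{r(x)}(y)$, where $d(x)=x^{-1}x$. An $N$-function is a continuous even convex $\Phi:\mathbb R\to[0,\infty)$ with $\Phi(x)=0$ iff $x=0$, $\Phi(x)/x\to0$ as $x\to0$, $\Phi(x)/x\to\infty$ as $x\to\infty$; complementary function $\Psi(y)=\sup_{x\ge0}(x|y|-\Phi(x))$. $\Phi\in\Delta_2$: there is $k>0$ with $\Phi(2x)\le k\Phi(x)$ for all $x\ge0$ ($G$ non-compact), resp. for all $x\ge x_0$ for some $x_0>0$ ($G$ compact). For a measurable $h$ on $G^u$, the gauge norm is $\|h\|^0_\Phi=\inf\{k>0:\int_{G^u}\Phi(|h|/k)d\lambda^u\le1\}$. *)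

theory Defs
  imports "HOL-Analysis.Analysis"
begin

text \<open>Groupoid structure on the whole carrier type 'g (Renault's axioms):
  G2 is the set of composable pairs, gmul the product, ginv the inverse.\<close>
definition groupoid :: "('g \<times> 'g) set \<Rightarrow> ('g \<Rightarrow> 'g \<Rightarrow> 'g) \<Rightarrow> ('g \<Rightarrow> 'g) \<Rightarrow> bool" where
  "groupoid G2 gmul ginv \<longleftrightarrow>
     (\<forall>x y z. (x, y) \<in> G2 \<and> (y, z) \<in> G2 \<longrightarrow>
         (gmul x y, z) \<in> G2 \<and> (x, gmul y z) \<in> G2 \<and> gmul (gmul x y) z = gmul x (gmul y z)) \<and>
     (\<forall>x. ginv (ginv x) = x) \<and>
     (\<forall>x. (ginv x, x) \<in> G2) \<and>
     (\<forall>x y. (x, y) \<in> G2 \<longrightarrow> gmul (ginv x) (gmul x y) = y \<and> gmul (gmul x y) (ginv y) = x)"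

definition range_map :: "('g \<Rightarrow> 'g \<Rightarrow> 'g) \<Rightarrow> ('g \<Rightarrow> 'g) \<Rightarrow> 'g \<Rightarrow> 'g" where
  "range_map gmul ginv x = gmul x (ginv x)"

definition source_map :: "('g \<Rightarrow> 'g \<Rightarrow> 'g) \<Rightarrow> ('g \<Rightarrow> 'g) \<Rightarrow> 'g \<Rightarrow> 'g" where
  "source_map gmul ginv x = gmul (ginv x) x"

definition unit_space :: "('g \<Rightarrow> 'g \<Rightarrow> 'g) \<Rightarrow> ('g \<Rightarrow> 'g) \<Rightarrow> 'g set" where
  "unit_space gmul ginv = range (range_map gmul ginv)"

definition topological_groupoid ::
  "('g::topological_space \<times> 'g) set \<Rightarrow> ('g \<Rightarrow> 'g \<Rightarrow> 'g) \<Rightarrow> ('g \<Rightarrow> 'g) \<Rightarrow> bool" where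
  "topological_groupoid G2 gmul ginv \<longleftrightarrow> groupoid G2 gmul ginv \<and>
     continuous_on G2 (\<lambda>(x, y). gmul x y) \<and> continuous_on UNIV ginv"

definition Cc :: "('g::topological_space \<Rightarrow> real) set" where
  "Cc = {f. continuous_on UNIV f \<and> compact (closure {x. f x \<noteq> 0})}"

definition measure_support :: "'g::topological_space measure \<Rightarrow> 'g set" where
  "measure_support M = {x. \<forall>U. open U \<and> x \<in> U \<longrightarrow> emeasure M U > 0}"

definition radon_measure :: "'g::topological_space measure \<Rightarrow> bool" where
  "radon_measure M \<longleftrightarrow> sets M = sets borel \<and>
     (\<forall>K. compact K \<longrightarrow> emeasure M K < \<infinity>) \<and>
     (\<forall>A \<in> sets borel. emeasure M A = (INF U \<in> {U. open U \<and> A \<subseteq> U}. emeasure M U)) \<and>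
     (\<forall>U. open U \<longrightarrow> emeasure M U = (SUP K \<in> {K. compact K \<and> K \<subseteq> U}. emeasure M K))"

definition left_haar_system ::
  "('g::topological_space \<Rightarrow> 'g \<Rightarrow> 'g) \<Rightarrow> ('g \<Rightarrow> 'g) \<Rightarrow> ('g \<Rightarrow> 'g measure) \<Rightarrow> bool" where
  "left_haar_system gmul ginv lam \<longleftrightarrow>
     (\<forall>u \<in> unit_space gmul ginv. radon_measure (lam u) \<and>
         measure_support (lam u) = {x. range_map gmul ginv x = u}) \<and>
     (\<forall>f \<in> Cc. continuous_on (unit_space gmul ginv) (\<lambda>u. integral\<^sup>L (lam u) f)) \<and>
     (\<forall>f \<in> Cc. \<forall>x.
        (\<integral>y. f (gmul x y) \<partial>lam (source_map gmul ginv x)) = (\<integral>y. f y \<partial>lam (range_map gmul ginv x)))"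

definition N_function :: "(real \<Rightarrow> real) \<Rightarrow> bool" where
  "N_function \<Phi> \<longleftrightarrow> continuous_on UNIV \<Phi> \<and> (\<forall>x. \<Phi> (- x) = \<Phi> x) \<and> convex_on UNIV \<Phi> \<and>
     (\<forall>x. \<Phi> x \<ge> 0) \<and> (\<forall>x. \<Phi> x = 0 \<longleftrightarrow> x = 0) \<and>
     ((\<lambda>x. \<Phi> x / x) \<longlongrightarrow> 0) (at 0) \<and>
     filterlim (\<lambda>x. \<Phi> x / x) at_top at_top"

definition complementary_function :: "(real \<Rightarrow> real) \<Rightarrow> real \<Rightarrow> real" where
  "complementary_function \<Phi> y = (SUP x \<in> {0..}. x * \<bar>y\<bar> - \<Phi> x)"

definition complementary_pair :: "(real \<Rightarrow> real) \<Rightarrow> (real \<Rightarrow> real) \<Rightarrow> bool" where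
  "complementary_pair \<Phi> \<Psi> \<longleftrightarrow> N_function \<Phi> \<and> N_function \<Psi> \<and> \<Psi> = complementary_function \<Phi>"

definition Delta2 :: "'g::topological_space itself \<Rightarrow> (real \<Rightarrow> real) \<Rightarrow> bool" where
  "Delta2 _ \<Phi> \<longleftrightarrow>
     (if compact (UNIV :: 'g set)
      then (\<exists>k>0. \<exists>x0>0. \<forall>x\<ge>x0. \<Phi> (2 * x) \<le> k * \<Phi> x)
      else (\<exists>k>0. \<forall>x\<ge>0. \<Phi> (2 * x) \<le> k * \<Phi> x))"

definition gauge_norm :: "(real \<Rightarrow> real) \<Rightarrow> 'g measure \<Rightarrow> 'g set \<Rightarrow> ('g \<Rightarrow> real) \<Rightarrow> real" where
  "gauge_norm \<Phi> M A h = Inf {k. k > 0 \<and> (\<integral>\<^sup>+ y \<in> A. ennreal (\<Phi> (\<bar>h y\<bar> / k)) \<partial>M) \<le> 1}"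

end

theory Submission
  imports Defs
begin

text \<open>For a fixed scale k > 0 the function \<Phi>(|f|/k) is again in C_c(G), so by the continuity
  axiom of the Haar system its integral J(u, k) over G^u depends continuously on u. By convexity
  of \<Phi> and \<Phi>(0) = 0, J(u, k) \<le> (k'/k) J(u, k') for 0 < k' \<le> k; this is all that is needed
  to see that the gauge norm g(u) = inf {k > 0. J(u, k) \<le> 1} is both upper and lower
  semicontinuous: g(u) < a iff J(u, k) < 1 for some k < a, and g(u) > a \<ge> 0 iff J(u, k) > 1
  for some k > a. Finally g vanishes off r(supp f), a compact set.\<close>

lemma radon_measureD:
  assumes "radon_measure M"
  shows sets_radon_measure: "sets M = sets borel"
    and emeasure_compact_finite: "compact K \<Longrightarrow> emeasure M K < \<infinity>"
    and emeasure_open_inner_regular: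
      "open U \<Longrightarrow> emeasure M U = (SUP K \<in> {K. compact K \<and> K \<subseteq> U}. emeasure M K)"
  using assms unfolding radon_measure_def by (elim conjE; simp only:)+

lemma open_Compl_measure_support: "open (- measure_support M)"
  unfolding open_subopen[of "- measure_support M"]
proof
  fix x assume "x \<in> - measure_support M"
  then obtain U where U: "open U" "x \<in> U" "emeasure M U = 0"
    unfolding measure_support_def by (auto simp: not_less)
  then have "U \<subseteq> - measure_support M"
    unfolding measure_support_def by auto
  with U show "\<exists>T. open T \<and> x \<in> T \<and> T \<subseteq> - measure_support M" by blast
qed

lemma emeasure_Compl_measure_support:
  assumes "radon_measure M"
  shows "emeasure M (- measure_support M) = 0"
proof -
  have sets: "sets M = sets borel" using sets_radon_measure[OF assms] .
  have "emeasure M K = 0" if K: "compact K" "K \<subseteq> - measure_support M" for K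
  proof -
    have "\<forall>x\<in>K. \<exists>U. open U \<and> x \<in> U \<and> emeasure M U = 0"
      using K(2) unfolding measure_support_def by (force simp: not_less)
    then obtain U where U: "\<And>x. x \<in> K \<Longrightarrow> open (U x) \<and> x \<in> U x \<and> emeasure M (U x) = 0"
      by metis
    obtain F where F: "F \<subseteq> K" "finite F" "K \<subseteq> \<Union> (U ` F)"
      by (rule compactE_image[OF K(1), of K U]) (use U in auto)
    have meas: "U ` F \<subseteq> sets M" using F(1) U sets by auto
    have "open (\<Union> (U ` F))" using F(1) U by (intro open_UN) auto
    then have "emeasure M K \<le> emeasure M (\<Union> (U ` F))"
      using F(3) sets by (intro emeasure_mono) auto
    also have "\<dots> \<le> (\<Sum>x\<in>F. emeasure M (U x))"
      using F(2) meas by (intro emeasure_subadditive_finite) auto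
    also have "\<dots> = 0" using F U by (auto intro!: sum.neutral)
    finally show ?thesis by simp
  qed
  moreover have "emeasure M (- measure_support M)
      = (SUP K \<in> {K. compact K \<and> K \<subseteq> - measure_support M}. emeasure M K)"
    using emeasure_open_inner_regular[OF assms open_Compl_measure_support] .
  ultimately show ?thesis by (simp add: SUP_bot_conv(2) flip: bot_ennreal)
qed

lemma compact_closure_subset_compact:
  fixes S :: "'a::t2_space set"
  assumes "compact K" "S \<subseteq> K"
  shows "compact (closure S)"
proof -
  have "closure S \<subseteq> K"
    using assms by (intro closure_minimal compact_imp_closed)
  then have "closure S = K \<inter> closure S" by blast
  then show ?thesis using compact_Int_closed[OF assms(1) closed_closure, of S] by simp
qed

lemma Cc_compose:
  fixes h :: "'a::t2_space \<Rightarrow> real"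
  assumes "continuous_on UNIV \<phi>" "\<phi> 0 = 0" "h \<in> Cc"
  shows "(\<lambda>x. \<phi> (h x)) \<in> Cc"
proof -
  have h: "continuous_on UNIV h" "compact (closure {x. h x \<noteq> 0})"
    using assms(3) unfolding Cc_def by auto
  have "{x. \<phi> (h x) \<noteq> 0} \<subseteq> closure {x. h x \<noteq> 0}"
    using assms(2) closure_subset by fastforce
  then have "compact (closure {x. \<phi> (h x) \<noteq> 0})"
    by (rule compact_closure_subset_compact[OF h(2)])
  moreover have "continuous_on UNIV (\<lambda>x. \<phi> (h x))"
    by (rule continuous_on_compose2[OF assms(1) h(1)]) auto
  ultimately show ?thesis unfolding Cc_def by simp
qed

lemma Cc_integrable:
  fixes h :: "'a::t2_space \<Rightarrow> real"
  assumes M: "radon_measure M" and "h \<in> Cc"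
  shows "integrable M h"
proof -
  define K where "K = closure {x. h x \<noteq> 0}"
  have h: "continuous_on UNIV h" "compact K"
    using assms(2) unfolding Cc_def K_def by auto
  have sets: "sets M = sets borel" using sets_radon_measure[OF M] .
  obtain B where B: "\<forall>x\<in>K. norm (h x) \<le> B"
    using compact_imp_bounded[OF compact_continuous_image[OF continuous_on_subset[OF h(1)] h(2)]]
    unfolding bounded_iff by auto
  have "K \<in> sets M" using h(2) sets by (simp add: compact_imp_closed)
  moreover have "emeasure M K < \<infinity>" using emeasure_compact_finite[OF M h(2)] .
  ultimately have "integrable M (\<lambda>x. B * indicator K x)" by simp
  then show ?thesis
  proof (rule Bochner_Integration.integrable_bound)
    show "h \<in> borel_measurable M"
      unfolding measurable_cong_sets[OF sets refl] by (rule borel_measurable_continuous_onI[OF h(1)])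
    have "norm (h x) \<le> norm (B * indicator K x)" for x
    proof (cases "x \<in> K")
      case True
      then show ?thesis using B by auto
    next
      case False
      then have "h x = 0" using closure_subset[of "{x. h x \<noteq> 0}"] unfolding K_def by blast
      then show ?thesis by simp
    qed
    then show "AE x in M. norm (h x) \<le> norm (B * indicator K x)" by simp
  qed
qed

lemma nn_integral_measure_support_eq_integral:
  fixes h :: "'a::t2_space \<Rightarrow> real"
  assumes M: "radon_measure M" and h: "h \<in> Cc" "\<And>x. 0 \<le> h x"
  shows "(\<integral>\<^sup>+ x \<in> measure_support M. ennreal (h x) \<partial>M) = ennreal (\<integral>x. h x \<partial>M)"
proof -
  have "- measure_support M \<in> sets M"
    using sets_radon_measure[OF M] open_Compl_measure_support[of M] by simp
  then have "- measure_support M \<in> null_sets M"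
    using emeasure_Compl_measure_support[OF M] by (simp add: null_setsI)
  then have "AE x in M. x \<in> measure_support M"
    by (rule AE_I') auto
  then have "(\<integral>\<^sup>+ x \<in> measure_support M. ennreal (h x) \<partial>M) = (\<integral>\<^sup>+ x. ennreal (h x) \<partial>M)"
    by (intro nn_integral_cong_AE) auto
  also have "\<dots> = ennreal (\<integral>x. h x \<partial>M)"
    using h by (intro nn_integral_eq_integral Cc_integrable[OF M]) auto
  finally show ?thesis .
qed

subsection \<open>The gauge of a modular\<close>

text \<open>J k plays the role of the modular \<rho>(f / k), so that modular_gauge J is the gauge
  (Luxemburg) norm of f. The hypothesis on J used below, J k \<le> (k'/k) J k' for 0 < k' \<le> k,
  is what convexity of \<Phi> and \<Phi>(0) = 0 give for \<rho>(f / k) = \<integral> \<Phi>(|f| / k).\<close>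

definition modular_gauge :: "(real \<Rightarrow> real) \<Rightarrow> real" where
  "modular_gauge J = Inf {k. 0 < k \<and> J k \<le> 1}"

lemma modular_gauge_le:
  fixes J :: "real \<Rightarrow> real"
  assumes "0 < k" "J k \<le> 1"
  shows "modular_gauge J \<le> k"
  unfolding modular_gauge_def using assms by (intro cInf_lower bdd_belowI[of _ 0]) auto

lemma ex_modular_le_1:
  fixes J :: "real \<Rightarrow> real"
  assumes scale: "\<And>k' k. 0 < k' \<Longrightarrow> k' \<le> k \<Longrightarrow> J k \<le> k' / k * J k'"
  shows "\<exists>k>0. J k \<le> 1"
proof -
  define k where "k = max 1 (J 1)"
  have "J k \<le> 1 / k * J 1" by (rule scale) (auto simp: k_def)
  also have "\<dots> \<le> 1" by (auto simp: k_def field_simps)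
  finally show ?thesis by (intro exI[of _ k]) (auto simp: k_def)
qed

lemma modular_gauge_nonneg:
  fixes J :: "real \<Rightarrow> real"
  assumes "\<And>k' k. 0 < k' \<Longrightarrow> k' \<le> k \<Longrightarrow> J k \<le> k' / k * J k'"
  shows "0 \<le> modular_gauge J"
  unfolding modular_gauge_def using ex_modular_le_1[OF assms] by (intro cInf_greatest) auto

lemma modular_less_1_if_gauge_less:
  fixes J :: "real \<Rightarrow> real"
  assumes scale: "\<And>k' k. 0 < k' \<Longrightarrow> k' \<le> k \<Longrightarrow> J k \<le> k' / k * J k'"
    and "modular_gauge J < k"
  shows "J k < 1"
proof -
  have "{k. 0 < k \<and> J k \<le> 1} \<noteq> {}" using ex_modular_le_1[OF scale] by blast
  then obtain k' where k': "0 < k'" "J k' \<le> 1" "k' < k"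
    using cInf_lessD[OF _ assms(2)[unfolded modular_gauge_def]] by blast
  have "J k \<le> k' / k * J k'" using k' by (intro scale) auto
  also have "\<dots> \<le> k' / k" using k' by (intro mult_left_le) auto
  also have "\<dots> < 1" using k' by (simp add: field_simps)
  finally show ?thesis .
qed

lemma continuous_on_modular_gauge:
  fixes J :: "'a::topological_space \<Rightarrow> real \<Rightarrow> real"
  assumes cont: "\<And>k. 0 < k \<Longrightarrow> continuous_on S (\<lambda>u. J u k)"
    and scale: "\<And>u k' k. u \<in> S \<Longrightarrow> 0 < k' \<Longrightarrow> k' \<le> k \<Longrightarrow> J u k \<le> k' / k * J u k'"
  shows "continuous_on S (\<lambda>u. modular_gauge (J u))"
  unfolding continuous_on_def
proof (intro ballI order_tendstoI)
  fix u a assume u: "u \<in> S"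
  have nonneg: "0 \<le> modular_gauge (J v)" if "v \<in> S" for v
    using modular_gauge_nonneg[OF scale[OF that]] .
  have less_1: "J v k < 1" if "v \<in> S" "modular_gauge (J v) < k" for v k
    using modular_less_1_if_gauge_less[OF scale[OF that(1)] that(2)] .
  have near: "\<forall>\<^sub>F v in at u within S. v \<in> S"
    by (simp add: eventually_at_filter)
  have limit: "((\<lambda>v. J v k) \<longlongrightarrow> J u k) (at u within S)" if "0 < k" for k
    using cont[OF that] u unfolding continuous_on_def by blast
  show "\<forall>\<^sub>F v in at u within S. a < modular_gauge (J v)" if a: "a < modular_gauge (J u)"
  proof (cases "a < 0")
    case True
    show ?thesis
      by (rule eventually_mono[OF near]) (use True nonneg in fastforce)
  next
    case False
    define k where "k = (a + modular_gauge (J u)) / 2"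
    have k: "0 < k" "a < k" "k < modular_gauge (J u)" using False a by (auto simp: k_def)
    have "1 < J u k"
    proof (rule ccontr)
      assume "\<not> 1 < J u k"
      then have "modular_gauge (J u) \<le> k" using k(1) by (intro modular_gauge_le) auto
      with k(3) show False by simp
    qed
    with near have "\<forall>\<^sub>F v in at u within S. v \<in> S \<and> 1 < J v k"
      by (intro eventually_conj order_tendstoD(1)[OF limit[OF k(1)]])
    then show ?thesis
    proof (rule eventually_mono)
      fix v assume v: "v \<in> S \<and> 1 < J v k"
      then have "\<not> modular_gauge (J v) < k" using less_1[of v k] by auto
      with k(2) show "a < modular_gauge (J v)" by simp
    qed
  qed
  show "\<forall>\<^sub>F v in at u within S. modular_gauge (J v) < a" if a: "modular_gauge (J u) < a"
  proof -
    define k where "k = (a + modular_gauge (J u)) / 2"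
    have k: "0 < k" "modular_gauge (J u) < k" "k < a"
      using a nonneg[OF u] by (auto simp: k_def)
    with near less_1[OF u] have "\<forall>\<^sub>F v in at u within S. v \<in> S \<and> J v k < 1"
      by (intro eventually_conj order_tendstoD(2)[OF limit[OF k(1)]])
    then show ?thesis
    proof (rule eventually_mono)
      fix v assume "v \<in> S \<and> J v k < 1"
      then have "modular_gauge (J v) \<le> k" using k(1) by (intro modular_gauge_le) auto
      with k(3) show "modular_gauge (J v) < a" by simp
    qed
  qed
qed

lemma N_functionD:
  assumes "N_function \<Phi>"
  shows N_function_continuous: "continuous_on UNIV \<Phi>"
    and N_function_convex: "convex_on UNIV \<Phi>"
    and N_function_nonneg: "0 \<le> \<Phi> x"
    and N_function_0: "\<Phi> 0 = 0"
  using assms unfolding N_function_def by auto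

lemma N_function_Cc_compose:
  fixes f :: "'a::t2_space \<Rightarrow> real"
  assumes \<Phi>: "N_function \<Phi>" and f: "f \<in> Cc"
  shows "(\<lambda>y. \<Phi> (\<bar>f y\<bar> / k)) \<in> Cc"
proof -
  have "continuous_on UNIV (\<lambda>t. \<Phi> (\<bar>t\<bar> / k))"
    unfolding divide_inverse
    by (intro continuous_on_compose2[OF N_function_continuous[OF \<Phi>]] continuous_intros) auto
  then show ?thesis
    using N_function_0[OF \<Phi>] by (intro Cc_compose[where \<phi> = "\<lambda>t. \<Phi> (\<bar>t\<bar> / k)", OF _ _ f]) auto
qed

lemma convex_on_scale_le:
  fixes \<phi> :: "'a::real_vector \<Rightarrow> real"
  assumes "convex_on UNIV \<phi>" "\<phi> 0 = 0" "0 \<le> c" "c \<le> 1"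
  shows "\<phi> (c *\<^sub>R x) \<le> c * \<phi> x"
  using convex_onD[OF assms(1,3,4), of 0 x] assms(2) by simp

lemma integral_N_function_scale_le:
  fixes f :: "'a::t2_space \<Rightarrow> real"
  assumes M: "radon_measure M" and \<Phi>: "N_function \<Phi>" and f: "f \<in> Cc"
    and k: "0 < k'" "k' \<le> k"
  shows "(\<integral>y. \<Phi> (\<bar>f y\<bar> / k) \<partial>M) \<le> k' / k * (\<integral>y. \<Phi> (\<bar>f y\<bar> / k') \<partial>M)"
proof -
  have "\<Phi> (\<bar>f y\<bar> / k) = \<Phi> ((k' / k) *\<^sub>R (\<bar>f y\<bar> / k'))" for y
    using k by simp
  also have "\<dots> y \<le> k' / k * \<Phi> (\<bar>f y\<bar> / k')" for y
    using k by (intro convex_on_scale_le N_function_convex[OF \<Phi>] N_function_0[OF \<Phi>]) auto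
  finally have "(\<integral>y. \<Phi> (\<bar>f y\<bar> / k) \<partial>M) \<le> (\<integral>y. k' / k * \<Phi> (\<bar>f y\<bar> / k') \<partial>M)"
    using Cc_integrable[OF M N_function_Cc_compose[OF \<Phi> f]] by (intro integral_mono) auto
  then show ?thesis by simp
qed

lemma gauge_norm_measure_support:
  fixes f :: "'a::t2_space \<Rightarrow> real"
  assumes M: "radon_measure M" and \<Phi>: "N_function \<Phi>" and f: "f \<in> Cc"
  shows "gauge_norm \<Phi> M (measure_support M) f = modular_gauge (\<lambda>k. \<integral>y. \<Phi> (\<bar>f y\<bar> / k) \<partial>M)"
proof -
  have "(\<integral>\<^sup>+ y \<in> measure_support M. ennreal (\<Phi> (\<bar>f y\<bar> / k)) \<partial>M)
      = ennreal (\<integral>y. \<Phi> (\<bar>f y\<bar> / k) \<partial>M)" for k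
    using N_function_nonneg[OF \<Phi>]
    by (intro nn_integral_measure_support_eq_integral[OF M N_function_Cc_compose[OF \<Phi> f]])
  then show ?thesis
    unfolding gauge_norm_def modular_gauge_def by (simp add: ennreal_le_1)
qed

lemma gauge_norm_eq_0_if_vanishes:
  assumes "\<Phi> 0 = 0" "\<And>y. y \<in> A \<Longrightarrow> h y = 0"
  shows "gauge_norm \<Phi> M A h = 0"
proof -
  have "(\<integral>\<^sup>+ y \<in> A. ennreal (\<Phi> (\<bar>h y\<bar> / k)) \<partial>M) = (\<integral>\<^sup>+ y. 0 \<partial>M)" for k
    using assms by (intro nn_integral_cong) (auto simp: indicator_def)
  then have "{k. 0 < k \<and> (\<integral>\<^sup>+ y \<in> A. ennreal (\<Phi> (\<bar>h y\<bar> / k)) \<partial>M) \<le> 1} = {0<..}"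
    by auto
  then show ?thesis
    unfolding gauge_norm_def by simp
qed

lemma compact_closure_gauge_norm_fibres_nonzero:
  fixes r :: "'a::t2_space \<Rightarrow> 'b::t2_space"
  assumes r: "continuous_on UNIV r" and f: "f \<in> Cc" and "\<Phi> 0 = 0"
  shows "compact (closure {u \<in> U. gauge_norm \<Phi> (M u) {x. r x = u} f \<noteq> 0})"
proof (rule compact_closure_subset_compact)
  show "compact (r ` closure {x. f x \<noteq> 0})"
    using f continuous_on_subset[OF r] unfolding Cc_def by (intro compact_continuous_image) auto
  show "{u \<in> U. gauge_norm \<Phi> (M u) {x. r x = u} f \<noteq> 0} \<subseteq> r ` closure {x. f x \<noteq> 0}"
  proof (rule subsetI, rule ccontr)
    fix u assume u: "u \<in> {u \<in> U. gauge_norm \<Phi> (M u) {x. r x = u} f \<noteq> 0}"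
      "u \<notin> r ` closure {x. f x \<noteq> 0}"
    have "f y = 0" if "y \<in> {x. r x = u}" for y
      using u(2) that closure_subset[of "{x. f x \<noteq> 0}"] by blast
    then have "gauge_norm \<Phi> (M u) {x. r x = u} f = 0"
      by (rule gauge_norm_eq_0_if_vanishes[where \<Phi> = \<Phi>, OF \<open>\<Phi> 0 = 0\<close>])
    with u(1) show False by simp
  qed
qed

lemma left_haar_systemD:
  assumes "left_haar_system gmul ginv lam"
  shows radon_measure_haar: "u \<in> unit_space gmul ginv \<Longrightarrow> radon_measure (lam u)"
    and measure_support_haar:
      "u \<in> unit_space gmul ginv \<Longrightarrow> measure_support (lam u) = {x. range_map gmul ginv x = u}"
    and continuous_on_integral_haar:
      "h \<in> Cc \<Longrightarrow> continuous_on (unit_space gmul ginv) (\<lambda>u. \<integral>x. h x \<partial>lam u)"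
  using assms unfolding left_haar_system_def by blast+

lemma continuous_range_map:
  assumes "topological_groupoid G2 gmul ginv"
  shows "continuous_on UNIV (range_map gmul ginv)"
proof -
  have mul: "continuous_on G2 (\<lambda>(x, y). gmul x y)" and inv: "continuous_on UNIV ginv"
    and groupoid: "groupoid G2 gmul ginv"
    using assms unfolding topological_groupoid_def by blast+
  have "(x, ginv x) \<in> G2" for x
    using groupoid unfolding groupoid_def by metis
  then have "continuous_on UNIV (\<lambda>x. (\<lambda>(x, y). gmul x y) (x, ginv x))"
    by (intro continuous_on_compose2[OF mul] continuous_intros inv) auto
  then show ?thesis
    unfolding range_map_def[abs_def] by simp
qed

lemma continuous_on_gauge_norm_fibres:
  fixes f :: "'a::t2_space \<Rightarrow> real"
  assumes haar: "left_haar_system gmul ginv lam" and \<Phi>: "N_function \<Phi>" and f: "f \<in> Cc"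
  shows "continuous_on (unit_space gmul ginv)
    (\<lambda>u. gauge_norm \<Phi> (lam u) {x. range_map gmul ginv x = u} f)"
proof (rule continuous_on_eq)
  define J where "J u = (\<lambda>k. \<integral>y. \<Phi> (\<bar>f y\<bar> / k) \<partial>lam u)" for u
  show "continuous_on (unit_space gmul ginv) (\<lambda>u. modular_gauge (J u))"
  proof (rule continuous_on_modular_gauge)
    show "continuous_on (unit_space gmul ginv) (\<lambda>u. J u k)" for k
      unfolding J_def by (rule continuous_on_integral_haar[OF haar N_function_Cc_compose[OF \<Phi> f]])
    show "J u k \<le> k' / k * J u k'" if "u \<in> unit_space gmul ginv" "0 < k'" "k' \<le> k" for u k' k
      unfolding J_def
      by (rule integral_N_function_scale_le[OF radon_measure_haar[OF haar that(1)] \<Phi> f that(2,3)])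
  qed
  show "modular_gauge (J u) = gauge_norm \<Phi> (lam u) {x. range_map gmul ginv x = u} f"
    if "u \<in> unit_space gmul ginv" for u
    using gauge_norm_measure_support[OF radon_measure_haar[OF haar that] \<Phi> f]
      measure_support_haar[OF haar that]
    unfolding J_def by simp
qed

theorem theorem3p1:
  fixes G2 :: "('g::{t2_space, second_countable_topology} \<times> 'g) set"
    and gmul :: "'g \<Rightarrow> 'g \<Rightarrow> 'g" and ginv :: "'g \<Rightarrow> 'g"
    and lam :: "'g \<Rightarrow> 'g measure"
    and \<Phi> \<Psi> :: "real \<Rightarrow> real" and f :: "'g \<Rightarrow> real"
  assumes "locally_compact_space (euclidean :: 'g topology)"
    and "topological_groupoid G2 gmul ginv"
    and "left_haar_system gmul ginv lam"
    and "complementary_pair \<Phi> \<Psi>"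
    and "Delta2 TYPE('g) \<Phi>"
    and "f \<in> Cc"
  defines "g \<equiv> (\<lambda>u. gauge_norm \<Phi> (lam u) {x. range_map gmul ginv x = u} f)"
  shows "continuous_on (unit_space gmul ginv) g \<and>
         compact (closure {u \<in> unit_space gmul ginv. g u \<noteq> 0})"
proof -
  have \<Phi>: "N_function \<Phi>" using assms(4) unfolding complementary_pair_def by blast
  show ?thesis
    unfolding g_def
    using continuous_on_gauge_norm_fibres[OF assms(3) \<Phi> assms(6)]
      compact_closure_gauge_norm_fibres_nonzero[where \<Phi> = \<Phi>,
        OF continuous_range_map[OF assms(2)] assms(6) N_function_0[OF \<Phi>]]
    by blast
qed

end
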